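(* Under the standing setup, let $u\in\widetilde X$. If $u\in\overline X$, then $\|\beta(u)-\beta(v)\|\le3\|u-v\|^{1/2}$ for all $v\in B(u,1)\cap\widetilde X$. If $u\notin\overline X$, set $r_u=\min\{1,\frac{\varepsilon\|u-u_{NN}\|}{480}\}$ and $\widetilde C_u=\frac1\varepsilon\max\{1200,\,480+128\|u-u_{NN}\|^{1/2}\}$; then \[\|\beta(u)-\beta(v)\|\le\widetilde C_u\|u-v\|^{1/2}\quad\forall\,v\in B(u,r_u)\cap\widetilde X.\]
   Context: Norms are Euclidean; $B(x,r)$ is the open ball; $\overline X$ is the closure. Standing setup: $X\subseteq\mathbb{R}^d$ has reach $\tau_X>0$, where $\tau_X=\sup\{t\ge0:\text{every }x\text{ with }d(x,X)<t\text{ has a unique closest point in }\overline X\}$; $\widetilde X=X+B(0,\tau_X/2)$; for $u\in\widetilde X$, $u_{NN}$ is the unique closest point to $u$ in $\overline X$, and it is a known fact that $\|u_{NN}-v_{NN}\|\le2\|u-v\|$ for all $u,v\in\widetilde X$. $\varepsilon\in(0,1)$. $S_X=\overline{\{(x-y)/\|x-y\|:x\ne y\in X\}}$. A linear $\Pi\colon\mathbb{R}^d\to\mathbb{R}^m$ provides $\eta$-convex hull distortion for $T\subseteq S^{d-1}$ if $|\,\|\Pi x\|-\|x\|\,|<\eta$ for all $x\in\operatorname{conv}(T)$. $\mathcal C=\{w_1,\ldots,w_\ell\}\subseteq S_X$ is finite with every $v\in S_X$ within distance $<\varepsilon/40$ of some $w_i$; $\Pi\in\mathbb{R}^{m\times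 d}$ provides $\frac{\varepsilon}{240}$-convex hull distortion for $S_X$. For $z\in\mathbb{R}^m$, $u\in\widetilde X$, $i=1,\ldots,\ell$: $\tilde g_i(z,u)=\langle z,\Pi w_i\rangle-\langle u-u_{NN},w_i\rangle-\frac{\varepsilon}{30}\|u-u_{NN}\|$, $\tilde g_{\ell+i}(z,u)=\langle u-u_{NN},w_i\rangle-\langle z,\Pi w_i\rangle-\frac{\varepsilon}{30}\|u-u_{NN}\|$; $\widetilde F_u=\{z:\tilde g_i(z,u)\le0,\ i=1,\ldots,2\ell\}$ (nonempty, closed, convex); $\beta(u)=\arg\min_{z\in\widetilde F_u}\|z\|$. *)

theory Defs
  imports "HOL-Analysis.Analysis"
begin

definition reach :: "'a::euclidean_space set \<Rightarrow> ereal" where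
  "reach X = Sup {ereal t | t. t \<ge> 0 \<and>
      (\<forall>x. infdist x X < t \<longrightarrow> (\<exists>!p. p \<in> closure X \<and> dist x p = infdist x X))}"

definition tube :: "'a::euclidean_space set \<Rightarrow> 'a set" where
  "tube X = {u. \<exists>x\<in>X. ereal (2 * dist u x) < reach X}"

definition nnp :: "'a::euclidean_space set \<Rightarrow> 'a \<Rightarrow> 'a" where
  "nnp X u = (THE p. p \<in> closure X \<and> dist u p = infdist u X)"

definition secants :: "'a::euclidean_space set \<Rightarrow> 'a set" where
  "secants X = closure {(x - y) /\<^sub>R norm (x - y) | x y. x \<in> X \<and> y \<in> X \<and> x \<noteq> y}"

definition conv_hull_distortion :: "('a::euclidean_space \<Rightarrow> 'b::euclidean_space) \<Rightarrow> real \<Rightarrow> 'a set \<Rightarrow> bool" where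
  "conv_hull_distortion Pm eta T \<longleftrightarrow> (\<forall>x \<in> convex hull T. \<bar>norm (Pm x) - norm x\<bar> < eta)"

text \<open>The feasible set F~_u, for the net w_0, ..., w_(l-1) (indices shifted to start at 0).
  The constraints g~_i and g~_(l+i) are written out.\<close>
definition Ftil :: "'a::euclidean_space set \<Rightarrow> ('a \<Rightarrow> 'b::euclidean_space) \<Rightarrow> (nat \<Rightarrow> 'a) \<Rightarrow> nat
    \<Rightarrow> real \<Rightarrow> 'a \<Rightarrow> 'b set" where
  "Ftil X Pm w l eps u = {z. \<forall>i<l.
      inner z (Pm (w i)) - inner (u - nnp X u) (w i) - eps / 30 * norm (u - nnp X u) \<le> 0 \<and>
      inner (u - nnp X u) (w i) - inner z (Pm (w i)) - eps / 30 * norm (u - nnp X u) \<le> 0}"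

definition beta :: "'a::euclidean_space set \<Rightarrow> ('a \<Rightarrow> 'b::euclidean_space) \<Rightarrow> (nat \<Rightarrow> 'a) \<Rightarrow> nat
    \<Rightarrow> real \<Rightarrow> 'a \<Rightarrow> 'b" where
  "beta X Pm w l eps u = (THE z. z \<in> Ftil X Pm w l eps u \<and>
      (\<forall>z' \<in> Ftil X Pm w l eps u. norm z \<le> norm z'))"

end

theory Submission
  imports Defs
begin

text \<open>\<beta>(u) is the minimum-norm point of the polytope cut out by the slabs
  \<bar>\<langle>z, \<Pi> w_i\<rangle> - \<langle>n, w_i\<rangle>\<bar> \<le> (\<epsilon>/30) \<parallel>n\<parallel> around n = u - u_NN.
  Convex hull distortion of \<Pi> gives, by a separation argument, a point of norm at most \<parallel>n\<parallel>
  in the narrower slabs of width (\<epsilon>/240) \<parallel>n\<parallel>. Moving the minimum-norm point towards it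
  by a fraction of order d / (\<epsilon> \<parallel>n\<parallel>) yields a feasible point for every centre n' with
  \<parallel>n - n'\<parallel> \<le> 3d, and moving u by d moves n by at most 3d since u_NN is 2-Lipschitz.
  Two minimum-norm points, each lying within O(d/\<epsilon>) of the other polytope, are by the
  parallelogram law O(\<surd>(d \<parallel>n\<parallel>)/\<epsilon>) apart. On the closure of X, \<beta> vanishes and
  \<parallel>\<beta>(v)\<parallel> \<le> d(v, X) \<le> \<parallel>u - v\<parallel>.\<close>

lemma nnp_closest:
  assumes "u \<in> tube X"
  shows "nnp X u \<in> closure X" "dist u (nnp X u) = infdist u X"
proof -
  obtain x where x: "x \<in> X" "ereal (2 * dist u x) < reach X"
    using assms unfolding tube_def by auto
  have "infdist u X \<le> 2 * dist u x"
    using infdist_le[OF x(1), of u] zero_le_dist[of u x] by linarith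
  then have "ereal (infdist u X) < reach X"
    using x(2) by (meson ereal_less_eq(3) order_le_less_trans)
  then have "\<exists>!p. p \<in> closure X \<and> dist u p = infdist u X"
    unfolding reach_def by (auto simp: less_Sup_iff)
  from theI'[OF this] show "nnp X u \<in> closure X" "dist u (nnp X u) = infdist u X"
    unfolding nnp_def by auto
qed

lemma le_sqrt_self:
  fixes x :: real
  assumes "0 \<le> x" "x \<le> 1"
  shows "x \<le> sqrt x"
  using assms mult_left_le[of x x] by (intro real_le_rsqrt) (simp add: power2_eq_square)

definition slab_set :: "('a::euclidean_space \<Rightarrow> 'b::euclidean_space) \<Rightarrow> (nat \<Rightarrow> 'a) \<Rightarrow> nat
    \<Rightarrow> real \<Rightarrow> 'a \<Rightarrow> 'b set" where
  "slab_set Pm w l c n = {z. \<forall>i<l. \<bar>inner z (Pm (w i)) - inner n (w i)\<bar> \<le> c}"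

lemma Ftil_eq_slab_set:
  "Ftil X Pm w l eps u = slab_set Pm w l (eps / 30 * norm (u - nnp X u)) (u - nnp X u)"
proof -
  have "(a - b - c \<le> 0 \<and> b - a - c \<le> 0) = (\<bar>a - b\<bar> \<le> c)" for a b c :: real
    by auto
  then show ?thesis unfolding Ftil_def slab_set_def by presburger
qed

lemma slab_set_eq_Inter_halfspaces:
  "slab_set Pm w l c n = (\<Inter>i<l. {z. inner (Pm (w i)) z \<le> c + inner n (w i)}
                                   \<inter> {z. inner (Pm (w i)) z \<ge> inner n (w i) - c})"
  unfolding slab_set_def by (force simp: abs_le_iff inner_commute)

lemma closed_slab_set: "closed (slab_set Pm w l c n)"
  unfolding slab_set_eq_Inter_halfspaces
  by (intro closed_INT closed_Int ballI closed_halfspace_le closed_halfspace_ge)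

lemma convex_slab_set: "convex (slab_set Pm w l c n)"
  unfolding slab_set_eq_Inter_halfspaces
  by (intro convex_INT convex_Int convex_halfspace_le convex_halfspace_ge)

lemma slab_set_mono: "c \<le> c' \<Longrightarrow> slab_set Pm w l c n \<subseteq> slab_set Pm w l c' n"
  unfolding slab_set_def by auto

lemma min_norm_point_eq_closest_point:
  fixes F :: "'a::euclidean_space set"
  assumes "closed F" "convex F" "F \<noteq> {}"
  shows "(THE z. z \<in> F \<and> (\<forall>z'\<in>F. norm z \<le> norm z')) = closest_point F 0"
proof (rule the_equality)
  show "closest_point F 0 \<in> F \<and> (\<forall>z'\<in>F. norm (closest_point F 0) \<le> norm z')"
    using closest_point_exists[OF assms(1,3), of 0] by (simp add: dist_norm)
next
  fix z assume "z \<in> F \<and> (\<forall>z'\<in>F. norm z \<le> norm z')"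
  then show "z = closest_point F 0"
    by (intro closest_point_unique[OF assms(2,1)]) (auto simp: dist_norm)
qed

lemma norm_closest_point_0_le:
  fixes F :: "'a::euclidean_space set"
  assumes "closed F" "x \<in> F"
  shows "norm (closest_point F 0) \<le> norm x"
  using closest_point_le[OF assms, of 0] by (simp add: dist_norm)

text \<open>Parallelogram law for z and the minimum-norm point c, using that their midpoint lies
  in F and so is no shorter than c.\<close>
lemma norm_diff_closest_point_0_sq_le:
  fixes F :: "'a::euclidean_space set"
  assumes F: "closed F" "convex F" and z: "z \<in> F"
  shows "norm (z - closest_point F 0) ^ 2 \<le> 2 * (norm z ^ 2 - norm (closest_point F 0) ^ 2)"
proof -
  define c where "c = closest_point F 0"
  define m where "m = (1/2) *\<^sub>R c + (1/2) *\<^sub>R z"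
  have "c \<in> F" unfolding c_def using closest_point_exists[OF F(1)] z by blast
  then have "m \<in> F" unfolding m_def using F(2) z by (intro convexD) auto
  then have "norm c \<le> norm m" unfolding c_def by (rule norm_closest_point_0_le[OF F(1)])
  then have "norm c ^ 2 \<le> norm m ^ 2" by (simp add: power_mono)
  moreover have "norm (z - c) ^ 2 = 2 * norm c ^ 2 + 2 * norm z ^ 2 - 4 * norm m ^ 2"
    unfolding m_def power2_norm_eq_inner
    by (simp add: inner_diff_left inner_diff_right inner_add_left inner_add_right
        inner_commute algebra_simps)
  ultimately show ?thesis unfolding c_def by simp
qed

lemma norm_closest_point_0_diff_le:
  fixes F1 F2 :: "'a::euclidean_space set"
  assumes F: "closed F1" "closed F2" "convex F2"
    and z': "z' \<in> F2" "norm (z' - closest_point F1 0) \<le> d"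
    and z'': "z'' \<in> F1" "norm (z'' - closest_point F2 0) \<le> d"
    and R: "norm (closest_point F1 0) \<le> R" "norm (closest_point F2 0) \<le> R"
  shows "norm (closest_point F1 0 - closest_point F2 0) \<le> d + sqrt (4 * d * (2 * R + d))"
proof -
  define c1 where "c1 = closest_point F1 0"
  define c2 where "c2 = closest_point F2 0"
  have "0 \<le> d" using z'(2) norm_ge_zero order_trans by blast
  have "norm c1 \<le> norm z''" unfolding c1_def by (rule norm_closest_point_0_le[OF F(1) z''(1)])
  have "norm c2 \<le> norm z'" unfolding c2_def by (rule norm_closest_point_0_le[OF F(2) z'(1)])
  have "norm z' \<le> norm c1 + d" "norm z'' \<le> norm c2 + d"
    using z'(2) z''(2) norm_triangle_ineq2[of z' c1] norm_triangle_ineq2[of z'' c2]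
    unfolding c1_def c2_def by linarith+
  then have "norm z' - norm c2 \<le> 2 * d" "norm z' + norm c2 \<le> 2 * R + d"
    using \<open>norm c1 \<le> norm z''\<close> R unfolding c1_def c2_def by linarith+
  then have "(norm z' - norm c2) * (norm z' + norm c2) \<le> (2 * d) * (2 * R + d)"
    using \<open>norm c2 \<le> norm z'\<close> \<open>0 \<le> d\<close> norm_ge_zero[of c2] by (intro mult_mono) auto
  then have "norm z' ^ 2 - norm c2 ^ 2 \<le> (2 * d) * (2 * R + d)"
    by (simp add: power2_eq_square algebra_simps)
  with norm_diff_closest_point_0_sq_le[OF F(2,3) z'(1)]
  have "norm (z' - c2) ^ 2 \<le> 2 * ((2 * d) * (2 * R + d))"
    unfolding c2_def by (smt (verit))
  then have "norm (z' - c2) ^ 2 \<le> 4 * d * (2 * R + d)" by simp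
  then have "norm (z' - c2) \<le> sqrt (4 * d * (2 * R + d))" by (simp add: real_le_rsqrt)
  moreover have "norm (c1 - c2) \<le> norm (c1 - z') + norm (z' - c2)"
    using norm_triangle_ineq[of "c1 - z'" "z' - c2"] by simp
  ultimately show ?thesis
    using z'(2) unfolding c1_def c2_def by (simp add: norm_minus_commute)
qed

lemma uminus_in_secants:
  assumes "x \<in> secants X"
  shows "- x \<in> secants X"
proof -
  define A where "A = {(x - y) /\<^sub>R norm (x - y) | x y. x \<in> X \<and> y \<in> X \<and> x \<noteq> y}"
  have "uminus ` A \<subseteq> A"
  proof
    fix q assume "q \<in> uminus ` A"
    then obtain x y where xy: "x \<in> X" "y \<in> X" "x \<noteq> y" "q = - ((x - y) /\<^sub>R norm (x - y))"
      unfolding A_def by auto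
    then have "q = (y - x) /\<^sub>R norm (y - x)"
      by (auto simp: norm_minus_commute algebra_simps)
    with xy show "q \<in> A" unfolding A_def by blast
  qed
  have "uminus ` closure A \<subseteq> closure (uminus ` A)"
    by (rule closure_linear_image_subset) (rule linear_uminus)
  also have "\<dots> \<subseteq> closure A" using \<open>uminus ` A \<subseteq> A\<close> by (rule closure_mono)
  finally show ?thesis using assms unfolding secants_def A_def [symmetric] by auto
qed

lemma norm_secants_le_1:
  assumes "x \<in> secants X"
  shows "norm x \<le> 1"
proof -
  have "secants X \<subseteq> cball 0 1" unfolding secants_def by (rule closure_minimal) auto
  then show ?thesis using assms by auto
qed

lemma convex_strict_epigraph_norm:
  fixes K \<delta> :: real
  assumes "K \<ge> 0"
  shows "convex {(y :: 'a::real_normed_vector, t). K * norm y + \<delta> < t}"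
proof (clarsimp simp: convex_def)
  fix y1 y2 :: 'a and t1 t2 a b :: real
  assume t: "K * norm y1 + \<delta> < t1" "K * norm y2 + \<delta> < t2"
    and ab: "0 \<le> a" "0 \<le> b" "a + b = 1"
  have "norm (a *\<^sub>R y1 + b *\<^sub>R y2) \<le> a * norm y1 + b * norm y2"
    using norm_triangle_ineq[of "a *\<^sub>R y1" "b *\<^sub>R y2"] ab by simp
  then have "K * norm (a *\<^sub>R y1 + b *\<^sub>R y2) \<le> K * (a * norm y1 + b * norm y2)"
    using assms by (rule mult_left_mono)
  also have "\<dots> = a * (K * norm y1 + \<delta>) + b * (K * norm y2 + \<delta>) - (a + b) * \<delta>"
    by (simp add: algebra_simps)
  also have "\<dots> = a * (K * norm y1 + \<delta>) + b * (K * norm y2 + \<delta>) - \<delta>"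
    using ab(3) by simp
  also have "\<dots> < a * t1 + b * t2 - \<delta>"
  proof (cases "a = 0")
    case True
    then show ?thesis using t(2) ab by simp
  next
    case False
    then show ?thesis
      using t ab by (intro diff_strict_right_mono add_less_le_mono mult_strict_left_mono mult_left_mono) auto
  qed
  finally show "K * norm (a *\<^sub>R y1 + b *\<^sub>R y2) + \<delta> < a * t1 + b * t2" by simp
qed

lemma nonneg_if_bounded_below_on_ray:
  fixes c m :: real
  assumes "\<And>T. 0 \<le> T \<Longrightarrow> m \<le> T * c"
  shows "0 \<le> c"
proof (rule ccontr)
  assume "\<not> 0 \<le> c"
  then have "m \<le> (\<bar>m\<bar> + 1) / - c * c" by (intro assms) (simp add: divide_nonneg_neg)
  also have "\<dots> = - (\<bar>m\<bar> + 1)" using \<open>\<not> 0 \<le> c\<close> by simp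
  finally show False by linarith
qed

lemma halfspace_above_norm_cone:
  fixes a :: "'a::real_inner" and s b K \<delta> :: real
  assumes K: "K \<ge> 0" and as: "(a, s) \<noteq> 0"
    and above: "\<And>y t. K * norm y + \<delta> < t \<Longrightarrow> b \<le> inner a y + s * t"
  shows "0 < s" "norm a \<le> s * K" "b \<le> s * \<delta>"
proof -
  have "b - s * (\<delta> + 1) \<le> T * s" if "0 \<le> T" for T
    using above[of 0 "\<delta> + 1 + T"] that by (simp add: algebra_simps)
  then have "0 \<le> s" by (rule nonneg_if_bounded_below_on_ray)
  have "b - s * (\<delta> + 1) \<le> T * (norm a * (s * K - norm a))" if "0 \<le> T" for T
    using above[of "- T *\<^sub>R a" "K * (T * norm a) + \<delta> + 1"] that
    by (simp add: power2_eq_square algebra_simps flip: power2_norm_eq_inner)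
  then have "0 \<le> norm a * (s * K - norm a)" by (rule nonneg_if_bounded_below_on_ray)
  then show "norm a \<le> s * K"
    using \<open>0 \<le> s\<close> K by (cases "a = 0") (auto simp: zero_le_mult_iff)
  then show "0 < s"
    using \<open>0 \<le> s\<close> as K by (cases "s = 0") (auto simp: zero_prod_def)
  have "b \<le> s * \<delta> + e" if "0 < e" for e
    using above[of 0 "\<delta> + e / s"] that \<open>0 < s\<close> by (simp add: algebra_simps)
  then show "b \<le> s * \<delta>" by (rule field_le_epsilon)
qed

text \<open>The witness comes from separating the image of C under p \<mapsto> (Pm p, n \<bullet> p) from the
  strict epigraph of y \<mapsto> \<parallel>n\<parallel> \<parallel>y\<parallel> + \<parallel>n\<parallel> e.\<close>
lemma exists_dominating_functional:
  fixes Pm :: "'a::euclidean_space \<Rightarrow> 'b::euclidean_space"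
  assumes lin: "linear Pm" and C: "convex C"
    and distortion: "\<And>p. p \<in> C \<Longrightarrow> norm p < norm (Pm p) + e"
  shows "\<exists>z. norm z \<le> norm n \<and> (\<forall>p\<in>C. inner n p - inner z (Pm p) \<le> norm n * e)"
proof (cases "C = {}")
  case False
  define G where "G = (\<lambda>p. (Pm p, inner n p)) ` C"
  define E where "E = {(y :: 'b, t). norm n * norm y + norm n * e < t}"
  have "linear (\<lambda>p. (Pm p, inner n p))"
    using lin by (intro linearI) (auto simp: linear_add linear_scale inner_add_right)
  then have "convex G" unfolding G_def using C by (rule convex_linear_image)
  moreover have "convex E" unfolding E_def by (rule convex_strict_epigraph_norm) simp
  moreover have "G \<noteq> {}" using False unfolding G_def by simp
  moreover have "(0, norm n * e + 1) \<in> E" unfolding E_def by simp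
  then have "E \<noteq> {}" by blast
  moreover have "G \<inter> E = {}"
  proof -
    have "inner n p \<le> norm n * norm (Pm p) + norm n * e" if "p \<in> C" for p
      using norm_cauchy_schwarz[of n p]
        mult_left_mono[OF less_imp_le[OF distortion[OF that]], of "norm n"]
      by (simp add: distrib_left)
    then show ?thesis unfolding G_def E_def by fastforce
  qed
  ultimately obtain a b where a: "a \<noteq> 0" "\<forall>x\<in>G. inner a x \<le> b" "\<forall>x\<in>E. inner a x \<ge> b"
    using separating_hyperplane_sets by metis
  obtain a1 s where a_eq: "a = (a1, s)" by (cases a)
  have "0 < s" "norm a1 \<le> s * norm n" "b \<le> s * (norm n * e)"
    by (rule halfspace_above_norm_cone[of "norm n" a1 s "norm n * e" b];
        use a a_eq in \<open>force simp: E_def inner_Pair\<close>)+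
  show ?thesis
  proof (intro exI conjI ballI)
    show "norm (- (1 / s) *\<^sub>R a1) \<le> norm n"
      using \<open>0 < s\<close> \<open>norm a1 \<le> s * norm n\<close> by (simp add: field_simps)
    fix p assume "p \<in> C"
    then have "inner a1 (Pm p) + s * inner n p \<le> b"
      using a(2) unfolding G_def a_eq by (auto simp: inner_Pair)
    then show "inner n p - inner (- (1 / s) *\<^sub>R a1) (Pm p) \<le> norm n * e"
      using \<open>0 < s\<close> \<open>b \<le> s * (norm n * e)\<close> by (simp add: field_simps inner_commute)
  qed
qed (auto intro: exI[of _ 0])

lemma exists_short_point_in_slab_set:
  fixes Pm :: "'a::euclidean_space \<Rightarrow> 'b::euclidean_space"
  assumes lin: "linear Pm" and distortion: "conv_hull_distortion Pm e (secants X)"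
    and w_in: "\<And>i. i < l \<Longrightarrow> w i \<in> secants X"
  shows "\<exists>z. norm z \<le> norm n \<and> z \<in> slab_set Pm w l (norm n * e) n"
proof -
  have "norm p < norm (Pm p) + e" if "p \<in> convex hull secants X" for p
    using distortion that unfolding conv_hull_distortion_def by fastforce
  then obtain z where z: "norm z \<le> norm n"
    and dom: "\<forall>p\<in>convex hull secants X. inner n p - inner z (Pm p) \<le> norm n * e"
    using exists_dominating_functional[OF lin convex_convex_hull] by blast
  have "\<bar>inner z (Pm (w i)) - inner n (w i)\<bar> \<le> norm n * e" if "i < l" for i
  proof -
    have "w i \<in> convex hull secants X" "- w i \<in> convex hull secants X"
      using w_in[OF that] uminus_in_secants[OF w_in[OF that]] by (auto intro: hull_inc)
    with dom show ?thesis using linear_neg[OF lin, of "w i"] by (force simp: abs_le_iff)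
  qed
  with z show ?thesis unfolding slab_set_def by blast
qed

lemma convex_combination_in_shifted_slab_set:
  assumes z: "z \<in> slab_set Pm w l c n" and zs: "zs \<in> slab_set Pm w l cs n"
    and \<theta>: "0 \<le> \<theta>" "\<theta> \<le> 1"
    and shift: "\<And>i. i < l \<Longrightarrow> \<bar>inner (n - n') (w i)\<bar> \<le> D"
  shows "(1 - \<theta>) *\<^sub>R z + \<theta> *\<^sub>R zs \<in> slab_set Pm w l ((1 - \<theta>) * c + \<theta> * cs + D) n'"
  unfolding slab_set_def
proof (intro CollectI allI impI)
  fix i assume i: "i < l"
  define a where "a = Pm (w i)"
  have "\<bar>inner z a - inner n (w i)\<bar> \<le> c" and "\<bar>inner zs a - inner n (w i)\<bar> \<le> cs"
    using z zs i unfolding slab_set_def a_def by auto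
  then have "\<bar>(1 - \<theta>) * (inner z a - inner n (w i))\<bar> \<le> (1 - \<theta>) * c"
    and "\<bar>\<theta> * (inner zs a - inner n (w i))\<bar> \<le> \<theta> * cs"
    using \<theta> by (simp_all only: abs_mult abs_of_nonneg mult_left_mono)
  moreover have "inner ((1 - \<theta>) *\<^sub>R z + \<theta> *\<^sub>R zs) a - inner n' (w i)
      = (1 - \<theta>) * (inner z a - inner n (w i)) + \<theta> * (inner zs a - inner n (w i))
        + inner (n - n') (w i)"
    by (simp add: inner_add_left inner_diff_left algebra_simps)
  ultimately show "\<bar>inner ((1 - \<theta>) *\<^sub>R z + \<theta> *\<^sub>R zs) (Pm (w i)) - inner n' (w i)\<bar>
      \<le> (1 - \<theta>) * c + \<theta> * cs + D"
    using shift[OF i] unfolding a_def by linarith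
qed

text \<open>The witness is z moved towards zs by the fraction \<theta> = 120 d / (eps \<parallel>n1\<parallel>): the slack
  gained from zs lying in the tighter slab absorbs the shift of the centre from n1 to n2.\<close>
lemma exists_near_point_in_shifted_slab_set:
  assumes w: "\<And>i. i < l \<Longrightarrow> norm (w i) \<le> 1"
    and eps: "0 < eps" "eps \<le> 1"
    and z: "z \<in> slab_set Pm w l (eps / 30 * norm n1) n1" "norm z \<le> norm n1"
    and zs: "zs \<in> slab_set Pm w l (norm n1 * (eps / 240)) n1" "norm zs \<le> norm n1"
    and d: "0 \<le> d" "norm (n1 - n2) \<le> 3 * d" "120 * d \<le> eps * norm n1"
  shows "\<exists>z'\<in>slab_set Pm w l (eps / 30 * norm n2) n2. norm (z' - z) \<le> 240 * d / eps"
proof -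
  define N where "N = norm n1"
  define \<theta> where "\<theta> = (if N = 0 then 0 else 120 * d / (eps * N))"
  have \<theta>: "0 \<le> \<theta>" "\<theta> \<le> 1" "\<theta> * N = 120 * d / eps"
    unfolding \<theta>_def using d eps by (auto simp: N_def field_simps)
  define z' where "z' = (1 - \<theta>) *\<^sub>R z + \<theta> *\<^sub>R zs"
  have "norm (z' - z) = \<theta> * norm (zs - z)"
    unfolding z'_def using \<theta> by (simp add: algebra_simps flip: scaleR_diff_right)
  also have "\<dots> \<le> \<theta> * (2 * N)"
    using z(2) zs(2) \<theta> norm_triangle_ineq4[of zs z] unfolding N_def
    by (intro mult_left_mono) auto
  also have "\<dots> = 240 * d / eps" using \<theta>(3) by simp
  finally have near: "norm (z' - z) \<le> 240 * d / eps" .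
  have shift: "\<bar>inner (n1 - n2) (w i)\<bar> \<le> 3 * d" if "i < l" for i
    using Cauchy_Schwarz_ineq2[of "n1 - n2" "w i"] mult_left_le[OF w[OF that], of "norm (n1 - n2)"] d(2)
    by simp
  have "(1 - \<theta>) * (eps / 30 * N) + \<theta> * (N * (eps / 240)) + 3 * d
      = eps / 30 * N - 7 / 240 * eps * (\<theta> * N) + 3 * d" by (simp add: field_simps)
  also have "\<dots> = eps / 30 * N - 7 / 2 * d + 3 * d" using \<theta>(3) eps by (simp add: field_simps)
  also have "\<dots> \<le> eps / 30 * (N - 3 * d)"
    using eps d mult_left_mono[of eps 5 d] by (simp add: algebra_simps)
  also have "\<dots> \<le> eps / 30 * norm n2"
    using norm_triangle_ineq2[of n1 n2] d(2) eps unfolding N_def by (intro mult_left_mono) auto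
  finally have "slab_set Pm w l ((1 - \<theta>) * (eps / 30 * N) + \<theta> * (N * (eps / 240)) + 3 * d) n2
      \<subseteq> slab_set Pm w l (eps / 30 * norm n2) n2" by (rule slab_set_mono)
  moreover have "z' \<in> slab_set Pm w l ((1 - \<theta>) * (eps / 30 * N) + \<theta> * (N * (eps / 240)) + 3 * d) n2"
    unfolding z'_def N_def by (rule convex_combination_in_shifted_slab_set[OF z(1) zs(1) \<theta>(1,2) shift])
  ultimately show ?thesis using near by blast
qed

lemma stability_bound_le_holder:
  fixes eps nu d :: real
  assumes eps: "0 < eps" "eps < 1" and nu: "0 < nu"
    and d: "0 \<le> d" "d < 1" "d < eps * nu / 480"
  shows "240 * d / eps + sqrt (4 * (240 * d / eps) * (2 * (2 * nu) + 240 * d / eps))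
           \<le> max 1200 (480 + 128 * sqrt nu) / eps * sqrt d"
proof -
  define \<delta> where "\<delta> = 240 * d / eps"
  have "0 \<le> \<delta>" "\<delta> \<le> nu / 2" unfolding \<delta>_def using d eps by (simp_all add: field_simps)
  have "\<delta> \<le> 240 * sqrt d / eps"
    unfolding \<delta>_def using le_sqrt_self[OF d(1) less_imp_le[OF d(2)]] eps by (simp add: divide_right_mono)
  have "4 * \<delta> * (2 * (2 * nu) + \<delta>) \<le> 4 * \<delta> * (9 / 2 * nu)"
    using \<open>0 \<le> \<delta>\<close> \<open>\<delta> \<le> nu / 2\<close> by (intro mult_left_mono) auto
  also have "\<dots> = 4320 * (nu * d) / eps" unfolding \<delta>_def by (simp add: field_simps)
  also have "\<dots> \<le> 4356 * (nu * d) / eps"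
    using nu d eps by (intro divide_right_mono) auto
  also have "\<dots> \<le> 4356 * (nu * d) / eps ^ 2"
    using nu d eps by (intro divide_left_mono) (auto simp: power2_eq_square mult_le_cancel_left1)
  also have "\<dots> = (66 * sqrt nu * sqrt d / eps) ^ 2"
    using nu d by (simp add: power_divide power_mult_distrib)
  finally have "sqrt (4 * \<delta> * (2 * (2 * nu) + \<delta>)) \<le> 66 * sqrt nu * sqrt d / eps"
    using nu d eps by (intro real_le_lsqrt) auto
  with \<open>\<delta> \<le> 240 * sqrt d / eps\<close>
  have "\<delta> + sqrt (4 * \<delta> * (2 * (2 * nu) + \<delta>)) \<le> (240 + 66 * sqrt nu) / eps * sqrt d"
    by (simp add: add_divide_distrib field_simps)
  also have "\<dots> \<le> max 1200 (480 + 128 * sqrt nu) / eps * sqrt d"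
    using eps d by (intro mult_right_mono divide_right_mono) auto
  finally show ?thesis unfolding \<delta>_def .
qed

locale min_norm_selection =
  fixes X :: "'a::euclidean_space set" and Pm :: "'a \<Rightarrow> 'b::euclidean_space"
    and w :: "nat \<Rightarrow> 'a" and l :: nat and eps :: real
  assumes eps: "0 < eps" "eps < 1"
    and w_in: "\<And>i. i < l \<Longrightarrow> w i \<in> secants X"
    and Pm_linear: "linear Pm"
    and Pm_distortion: "conv_hull_distortion Pm (eps / 240) (secants X)"
begin

definition proj :: "'a \<Rightarrow> 'b" where
  "proj n = closest_point (slab_set Pm w l (eps / 30 * norm n) n) 0"

lemma exists_short_point_in_tight_slab_set:
  "\<exists>z. norm z \<le> norm n \<and> z \<in> slab_set Pm w l (norm n * (eps / 240)) n"
  by (rule exists_short_point_in_slab_set[OF Pm_linear Pm_distortion w_in])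

lemma exists_short_feasible_point:
  "\<exists>z. norm z \<le> norm n \<and> z \<in> slab_set Pm w l (eps / 30 * norm n) n"
proof -
  have "slab_set Pm w l (norm n * (eps / 240)) n \<subseteq> slab_set Pm w l (eps / 30 * norm n) n"
    using eps by (intro slab_set_mono) simp
  then show ?thesis using exists_short_point_in_tight_slab_set by blast
qed

lemma proj_in_slab_set: "proj n \<in> slab_set Pm w l (eps / 30 * norm n) n"
  using closest_point_exists(1)[OF closed_slab_set] exists_short_feasible_point
  unfolding proj_def by blast

lemma norm_proj_le: "norm (proj n) \<le> norm n"
  using norm_closest_point_0_le[OF closed_slab_set] exists_short_feasible_point
  unfolding proj_def by (meson order_trans)

lemma beta_eq_proj: "beta X Pm w l eps u = proj (u - nnp X u)"
  unfolding beta_def Ftil_eq_slab_set proj_def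
  using exists_short_feasible_point
  by (intro min_norm_point_eq_closest_point closed_slab_set convex_slab_set) blast

lemma norm_proj_diff_le:
  assumes d: "0 \<le> d" "norm (n1 - n2) \<le> 3 * d"
    and small: "120 * d \<le> eps * norm n1" "120 * d \<le> eps * norm n2"
    and R: "norm n1 \<le> R" "norm n2 \<le> R"
  shows "norm (proj n1 - proj n2) \<le> 240 * d / eps + sqrt (4 * (240 * d / eps) * (2 * R + 240 * d / eps))"
proof -
  have w: "norm (w i) \<le> 1" if "i < l" for i
    using norm_secants_le_1[OF w_in[OF that]] .
  have near: "\<exists>z'\<in>slab_set Pm w l (eps / 30 * norm m2) m2. norm (z' - proj m1) \<le> 240 * d / eps"
    if "norm (m1 - m2) \<le> 3 * d" "120 * d \<le> eps * norm m1" for m1 m2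
  proof -
    obtain zs where "norm zs \<le> norm m1" "zs \<in> slab_set Pm w l (norm m1 * (eps / 240)) m1"
      using exists_short_point_in_tight_slab_set by blast
    then show ?thesis
      using exists_near_point_in_shifted_slab_set[OF w _ _ proj_in_slab_set norm_proj_le]
        eps d(1) that by auto
  qed
  obtain z' where "z' \<in> slab_set Pm w l (eps / 30 * norm n2) n2" "norm (z' - proj n1) \<le> 240 * d / eps"
    using near[OF d(2) small(1)] by blast
  moreover obtain z'' where
    "z'' \<in> slab_set Pm w l (eps / 30 * norm n1) n1" "norm (z'' - proj n2) \<le> 240 * d / eps"
    using near[of n2 n1] d(2) small(2) by (auto simp: norm_minus_commute)
  ultimately show ?thesis
    unfolding proj_def
    by (intro norm_closest_point_0_diff_le closed_slab_set convex_slab_set)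
      (use R norm_proj_le order_trans in \<open>auto simp: proj_def\<close>)
qed

lemma beta_holder_on_closure:
  assumes u: "u \<in> tube X" "u \<in> closure X" and v: "v \<in> tube X" and close: "norm (u - v) < 1"
  shows "norm (beta X Pm w l eps u - beta X Pm w l eps v) \<le> 3 * sqrt (norm (u - v))"
proof -
  have "X \<noteq> {}" using u(1) unfolding tube_def by auto
  then have "infdist u X = 0" using u(2) in_closure_iff_infdist_zero by blast
  then have beta_u: "beta X Pm w l eps u = 0"
    using norm_proj_le[of "u - nnp X u"] nnp_closest(2)[OF u(1)]
    unfolding beta_eq_proj by (simp add: dist_norm)
  have "norm (beta X Pm w l eps v) \<le> norm (u - v)"
  proof -
    have "norm (v - nnp X v) \<le> infdist u X + dist v u"
      using nnp_closest(2)[OF v] infdist_triangle[of v X u] by (simp add: dist_norm)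
    then show ?thesis
      using norm_proj_le[of "v - nnp X v"] \<open>infdist u X = 0\<close>
      unfolding beta_eq_proj by (simp add: dist_norm norm_minus_commute)
  qed
  moreover have "norm (u - v) \<le> sqrt (norm (u - v))"
    using close by (intro le_sqrt_self) auto
  ultimately have "norm (beta X Pm w l eps v) \<le> 3 * sqrt (norm (u - v))"
    using real_sqrt_ge_zero[OF norm_ge_zero[of "u - v"]] by linarith
  with beta_u show ?thesis by simp
qed

lemma beta_holder_off_closure:
  assumes u: "u \<in> tube X" "u \<notin> closure X" and v: "v \<in> tube X"
    and nnp_lip: "norm (nnp X u - nnp X v) \<le> 2 * norm (u - v)"
    and close: "norm (u - v) < min 1 (eps * norm (u - nnp X u) / 480)"
  shows "norm (beta X Pm w l eps u - beta X Pm w l eps v)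
           \<le> max 1200 (480 + 128 * sqrt (norm (u - nnp X u))) / eps * sqrt (norm (u - v))"
proof -
  define nu where "nu = norm (u - nnp X u)"
  define d where "d = norm (u - v)"
  have "0 < nu" using u nnp_closest(1)[OF u(1)] unfolding nu_def by auto
  have d: "0 \<le> d" "d < 1" "d < eps * nu / 480" using close unfolding d_def nu_def by auto
  have shift: "norm ((u - nnp X u) - (v - nnp X v)) \<le> 3 * d"
    using norm_triangle_ineq4[of "u - v" "nnp X u - nnp X v"] nnp_lip
    unfolding d_def by (simp add: algebra_simps)
  then have nv: "nu - 3 * d \<le> norm (v - nnp X v)" "norm (v - nnp X v) \<le> nu + 3 * d"
    using norm_triangle_ineq2[of "u - nnp X u" "v - nnp X v"]
      norm_triangle_ineq2[of "v - nnp X v" "u - nnp X u"]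
    unfolding nu_def by (auto simp: norm_minus_commute)
  have "eps * nu \<le> nu" "eps * d \<le> d" using eps \<open>0 < nu\<close> d by (simp_all add: mult_left_le_one_le)
  then have "120 * d \<le> eps * nu" "120 * d \<le> eps * norm (v - nnp X v)" "norm (v - nnp X v) \<le> 2 * nu"
    using d nv eps mult_left_mono[OF nv(1), of eps] by (auto simp: algebra_simps)
  then have "norm (beta X Pm w l eps u - beta X Pm w l eps v)
      \<le> 240 * d / eps + sqrt (4 * (240 * d / eps) * (2 * (2 * nu) + 240 * d / eps))"
    unfolding beta_eq_proj
    by (intro norm_proj_diff_le[OF d(1) shift]) (auto simp: nu_def)
  also have "\<dots> \<le> max 1200 (480 + 128 * sqrt nu) / eps * sqrt d"
    by (rule stability_bound_le_holder[OF eps \<open>0 < nu\<close> d])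
  finally show ?thesis unfolding nu_def d_def .
qed

end

theorem lemma4p1:
  fixes X :: "'a::euclidean_space set" and Pm :: "'a \<Rightarrow> 'b::euclidean_space"
    and w :: "nat \<Rightarrow> 'a" and l :: nat and eps :: real and u :: 'a
  assumes reach_pos: "reach X > 0"
    and nn_lip: "\<And>u v. u \<in> tube X \<Longrightarrow> v \<in> tube X \<Longrightarrow>
                   norm (nnp X u - nnp X v) \<le> 2 * norm (u - v)"
    and eps: "0 < eps" "eps < 1"
    and w_in: "\<And>i. i < l \<Longrightarrow> w i \<in> secants X"
    and w_net: "\<And>v. v \<in> secants X \<Longrightarrow> \<exists>i<l. norm (v - w i) < eps / 40"
    and Pi_lin: "linear Pm"
    and Pi_dist: "conv_hull_distortion Pm (eps / 240) (secants X)"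
    and u: "u \<in> tube X"
  shows "(u \<in> closure X \<longrightarrow>
            (\<forall>v \<in> ball u 1 \<inter> tube X.
               norm (beta X Pm w l eps u - beta X Pm w l eps v) \<le> 3 * sqrt (norm (u - v))))
       \<and> (u \<notin> closure X \<longrightarrow>
            (let r = min 1 (eps * norm (u - nnp X u) / 480);
                 C = max 1200 (480 + 128 * sqrt (norm (u - nnp X u))) / eps
             in \<forall>v \<in> ball u r \<inter> tube X.
                  norm (beta X Pm w l eps u - beta X Pm w l eps v) \<le> C * sqrt (norm (u - v))))"
proof -
  interpret min_norm_selection X Pm w l eps
    using eps w_in Pi_lin Pi_dist by (simp add: min_norm_selection_def)
  show ?thesis
    unfolding Let_def
    using beta_holder_on_closure[OF u] beta_holder_off_closure[OF u _ _ nn_lip[OF u]]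
    by (auto simp: dist_norm)
qed

end
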